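(* Let $(x_t)$ be a real-valued stationary time series admitting a weak innovations representation: causal maps $G,H$ with $\nu_t=G(x_t,x_{t-1},\dots)$, $\hat x_t=H(\nu_t,\nu_{t-1},\dots)$, $(\nu_t)$ i.i.d. $\mathcal U[0,1]$, and $(\hat x_t)\stackrel{d}{=}(x_t)$ (equality of all finite-dimensional joint distributions). Assume the decoder $H$ is injective. Define the conditional distribution functions $$F(x\mid a_{t-1},a_{t-2},\dots)=\mathbb{P}[x_t\le x\mid x_{t-1}=a_{t-1},x_{t-2}=a_{t-2},\dots],$$ $$\hat F(x\mid b_{t-1},b_{t-2},\dots)=\mathbb{P}[\hat x_t\le x\mid \nu_{t-1}=b_{t-1},\nu_{t-2}=b_{t-2},\dots].$$ Then $F(x\mid a_{t-1},a_{t-2},\dots)=\hat F(x\mid b_{t-1},b_{t-2},\dots)$, as functions of $x$, almost everywhere, for almost all $a_{t-1},a_{t-2},\dots$, where $b_s=H^{-1}(a_s,a_{s-1},\dots)$, i.e. $(b_s)$ is the (unique, by injectivity of $H$) sequence with $a_s=H(b_s,b_{s-1},\dots)$ for all $s\le t-1$.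
   Context: The weak innovations representation relaxes the Wiener–Kallianpur innovations representation by requiring only that the decoder output $(\hat x_t)$ have the same distribution as $(x_t)$, rather than equal $(x_t)$. *)

theory Defs
  imports "HOL-Probability.Probability"
begin

text \<open>Space of one-sided sequences (s_0, s_1, ...) of reals, index k = lag k.\<close>
definition seqspace :: "(nat \<Rightarrow> real) measure" where
  "seqspace = PiM UNIV (\<lambda>_. borel)"

definition hist :: "(int \<Rightarrow> 'a \<Rightarrow> real) \<Rightarrow> int \<Rightarrow> 'a \<Rightarrow> nat \<Rightarrow> real" where
  "hist z t \<omega> = (\<lambda>k. z (t - int k) \<omega>)"

definition past :: "(int \<Rightarrow> 'a \<Rightarrow> real) \<Rightarrow> int \<Rightarrow> 'a \<Rightarrow> nat \<Rightarrow> real" where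
  "past z t \<omega> = (\<lambda>k. z (t - 1 - int k) \<omega>)"

definition same_fdd :: "'a measure \<Rightarrow> (int \<Rightarrow> 'a \<Rightarrow> real) \<Rightarrow> (int \<Rightarrow> 'a \<Rightarrow> real) \<Rightarrow> bool" where
  "same_fdd M z w \<longleftrightarrow> (\<forall>J. finite J \<longrightarrow>
     distr M (PiM J (\<lambda>_. borel)) (\<lambda>\<omega>. restrict (\<lambda>j. z j \<omega>) J) =
     distr M (PiM J (\<lambda>_. borel)) (\<lambda>\<omega>. restrict (\<lambda>j. w j \<omega>) J))"

definition stationary :: "'a measure \<Rightarrow> (int \<Rightarrow> 'a \<Rightarrow> real) \<Rightarrow> bool" where
  "stationary M z \<longleftrightarrow> (\<forall>h. same_fdd M (\<lambda>j. z (j + h)) z)"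

text \<open>Fc is a (jointly measurable) version of the conditional distribution function
  Fc r (a_{t-1}, a_{t-2}, ...) = P[z_t \<le> r | y_{t-1} = a_{t-1}, y_{t-2} = a_{t-2}, ...].\<close>
definition cond_cdf :: "'a measure \<Rightarrow> (int \<Rightarrow> 'a \<Rightarrow> real) \<Rightarrow> (int \<Rightarrow> 'a \<Rightarrow> real) \<Rightarrow> int
    \<Rightarrow> (real \<Rightarrow> (nat \<Rightarrow> real) \<Rightarrow> real) \<Rightarrow> bool" where
  "cond_cdf M z y t Fc \<longleftrightarrow>
     (\<lambda>(r, a). Fc r a) \<in> borel_measurable (borel \<Otimes>\<^sub>M seqspace) \<and>
     (\<forall>r. AE \<omega> in M. Fc r (past y t \<omega>) =
        real_cond_exp M (vimage_algebra (space M) (past y t) seqspace)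
          (\<lambda>\<omega>. indicator {\<omega>' \<in> space M. z t \<omega>' \<le> r} \<omega>) \<omega>)"

definition dec_inv :: "((nat \<Rightarrow> real) \<Rightarrow> real) \<Rightarrow> (nat \<Rightarrow> real) \<Rightarrow> nat \<Rightarrow> real" where
  "dec_inv H a = (THE b. (\<forall>k. b k \<in> {0..1}) \<and> (\<forall>k. a k = H (\<lambda>j. b (k + j))))"

end

theory Submission
  imports Defs
begin

(* Because xhat has the finite-dimensional distributions of x, the pairs (x_t, past of x) and
   (xhat_t, past of xhat) have the same law, so F is also a conditional distribution function of
   xhat_t given the past of xhat. That past is obtained from the past of nu by applying H along
   the sequence; this map is injective on [0,1]^N, and inner regularity of the law of its graph
   makes its inverse Borel on a set of full measure. So the past of nu is almost surely a Borel
   function of the past of xhat, Fhat( . | H^-1 a) is a second version of the same conditional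
   distribution function, and two versions agree almost everywhere for each fixed level r.
   Fubini's theorem then exchanges "almost all a" and "almost all r". *)

lemma finite_measure_AE_in_compact_Union:
  fixes M :: "'a::{second_countable_topology, complete_space} measure"
  assumes "finite_measure M" and sets_M: "sets M = sets borel" and B: "B \<in> sets borel"
  obtains K :: "nat \<Rightarrow> 'a set" where "\<And>n. compact (K n)" "\<And>n. K n \<subseteq> B" "AE x in M. x \<in> B \<longrightarrow> (\<exists>n. x \<in> K n)"
proof -
  interpret finite_measure M by fact
  have "\<exists>K. compact K \<and> K \<subseteq> B \<and> measure M B < measure M K + e" if "e > 0" for e
  proof (cases "measure M B < e")
    case True
    then show ?thesis by (intro exI[of _ "{}"]) auto
  next
    case False
    have "emeasure M B = (SUP K \<in> {K. K \<subseteq> B \<and> compact K}. emeasure M K)"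
      using inner_regular[OF sets_M _ B] by simp
    moreover have "ennreal (measure M B - e) < emeasure M B"
      using False \<open>e > 0\<close> by (simp add: emeasure_eq_measure ennreal_lessI)
    ultimately obtain K where "K \<subseteq> B" "compact K" "ennreal (measure M B - e) < emeasure M K"
      by (auto simp: less_SUP_iff)
    then show ?thesis
      using False by (intro exI[of _ K]) (auto simp: emeasure_eq_measure ennreal_less_iff)
  qed
  then have "\<forall>n. \<exists>K. compact K \<and> K \<subseteq> B \<and> measure M B < measure M K + inverse (Suc n)"
    by simp
  then obtain K where K: "\<And>n. compact (K n)" "\<And>n. K n \<subseteq> B"
    and approx: "\<And>n. measure M B < measure M (K n) + inverse (Suc n)"
    by metis
  have K_sets: "K n \<in> sets M" for n
    using K(1) by (simp add: sets_M compact_imp_closed)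
  have "measure M (B - (\<Union>n. K n)) \<le> inverse (Suc n)" for n
  proof -
    have "measure M (B - (\<Union>n. K n)) \<le> measure M (B - K n)"
      using B K_sets by (intro finite_measure_mono) (auto simp: sets_M)
    also have "\<dots> = measure M B - measure M (K n)"
      using B K_sets K(2) by (intro finite_measure_Diff) (auto simp: sets_M)
    finally show ?thesis using approx[of n] by simp
  qed
  then have "measure M (B - (\<Union>n. K n)) \<le> 0"
    by (intro LIMSEQ_le_const[OF LIMSEQ_inverse_real_of_nat]) auto
  then have "emeasure M (B - (\<Union>n. K n)) = 0"
    by (simp add: emeasure_eq_measure measure_nonneg antisym)
  then have "AE x in M. x \<notin> B - (\<Union>n. K n)"
    using B K_sets by (intro AE_not_in) (auto simp: sets_M)
  then have "AE x in M. x \<in> B \<longrightarrow> (\<exists>n. x \<in> K n)"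
    by eventually_elim auto
  then show thesis
    by (rule that[OF K])
qed

lemma borel_measurable_left_inverse_on_AE_set:
  fixes \<phi> :: "'a::polish_space \<Rightarrow> 'b::polish_space"
  assumes "finite_measure \<mu>" and sets_\<mu>: "sets \<mu> = sets borel"
    and \<phi>[measurable]: "\<phi> \<in> borel_measurable borel" and A[measurable]: "A \<in> sets borel"
    and AE_A: "AE b in \<mu>. b \<in> A" and \<psi>: "\<And>b. b \<in> A \<Longrightarrow> \<psi> (\<phi> b) = b"
  obtains S where "S \<in> sets borel" "AE b in \<mu>. \<phi> b \<in> S"
    "\<psi> \<in> borel_measurable (restrict_space borel S)"
proof -
  define \<Gamma> where "\<Gamma> = {p. fst p \<in> A \<and> snd p = \<phi> (fst p)}"
  have fst_borel[measurable]: "fst \<in> borel_measurable (borel :: ('a \<times> 'b) measure)"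
    and snd_borel[measurable]: "snd \<in> borel_measurable (borel :: ('a \<times> 'b) measure)"
    by (auto intro!: borel_measurable_continuous_onI continuous_intros)
  have \<Gamma>_borel: "\<Gamma> \<in> sets borel"
  proof -
    have "\<Gamma> = {p \<in> space borel. fst p \<in> A} \<inter> {p \<in> space borel. snd p = \<phi> (fst p)}"
      by (auto simp: \<Gamma>_def)
    also have "\<dots> \<in> sets borel"
      by measurable
    finally show ?thesis .
  qed
  have graph[measurable]: "(\<lambda>b. (b, \<phi> b)) \<in> borel_measurable \<mu>"
    unfolding measurable_cong_sets[OF sets_\<mu> refl] by measurable
  define \<rho> where "\<rho> = distr \<mu> borel (\<lambda>b. (b, \<phi> b))"
  have "finite_measure \<rho>"
    unfolding \<rho>_def using \<open>finite_measure \<mu>\<close> by (rule finite_measure.finite_measure_distr) simp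
  moreover have "sets \<rho> = sets borel"
    by (simp add: \<rho>_def)
  ultimately obtain K :: "nat \<Rightarrow> ('a \<times> 'b) set" where K: "\<And>n. compact (K n)" "\<And>n. K n \<subseteq> \<Gamma>"
    and AE_K: "AE p in \<rho>. p \<in> \<Gamma> \<longrightarrow> (\<exists>n. p \<in> K n)"
    using \<Gamma>_borel by (rule finite_measure_AE_in_compact_Union) blast
  define S where "S = (\<Union>n. snd ` K n)"
  have compact_image: "compact (snd ` K n)" for n
    using K(1) by (rule compact_continuous_image[rotated]) (intro continuous_intros)
  then have image_borel: "snd ` K n \<in> sets borel" for n
    by (simp add: compact_imp_closed)
  then have S_borel: "S \<in> sets borel"
    by (auto simp: S_def)
  have [measurable]: "K n \<in> sets borel" for n
    using K(1) by (simp add: compact_imp_closed)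
  have "Measurable.pred borel (\<lambda>p. p \<in> \<Gamma> \<longrightarrow> (\<exists>n. p \<in> K n))"
    using \<Gamma>_borel by measurable
  then have "AE b in \<mu>. (b, \<phi> b) \<in> \<Gamma> \<longrightarrow> (\<exists>n. (b, \<phi> b) \<in> K n)"
    using AE_K unfolding \<rho>_def pred_def by (subst (asm) AE_distr_iff) auto
  then have "AE b in \<mu>. \<phi> b \<in> S"
    using AE_A by eventually_elim (force simp: S_def \<Gamma>_def)
  moreover have "\<psi> \<in> borel_measurable (restrict_space borel S)"
  proof (rule measurable_piecewise_restrict[of "range (\<lambda>n. snd ` K n)"])
    fix \<Omega> assume "\<Omega> \<in> range (\<lambda>n. snd ` K n)"
    then obtain n where \<Omega>: "\<Omega> = snd ` K n" by blast
    \<comment> \<open>on a compact part of the graph, projecting to the second coordinate is a homeomorphism\<close>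
    have "\<forall>p\<in>K n. (\<psi> (snd p), snd p) = p"
      using K(2)[of n] \<psi> by (force simp: \<Gamma>_def)
    then have "continuous_on \<Omega> (\<lambda>a. (\<psi> a, a))"
      unfolding \<Omega> using K(1) by (intro continuous_on_inv continuous_intros)
    then have "continuous_on \<Omega> \<psi>"
      using continuous_on_fst by fastforce
    moreover have "S \<inter> \<Omega> = \<Omega>"
      using \<Omega> by (auto simp: S_def)
    then have "restrict_space (restrict_space borel S) \<Omega> = restrict_space borel \<Omega>"
      using S_borel image_borel \<Omega> by (subst restrict_restrict_space) auto
    ultimately show "\<psi> \<in> borel_measurable (restrict_space (restrict_space borel S) \<Omega>)"
      by (simp add: borel_measurable_continuous_on_restrict)
    show "\<Omega> \<inter> space (restrict_space borel S) \<in> sets (restrict_space borel S)"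
      using S_borel image_borel \<Omega> by (auto simp: sets_restrict_space_iff S_def)
  qed (auto simp: S_def space_restrict_space)
  ultimately show thesis
    using S_borel that by blast
qed

lemma AE_AE_lborel_swap:
  fixes P :: "real \<Rightarrow> 'b \<Rightarrow> bool"
  assumes "sigma_finite_measure \<mu>" and sets_\<mu>: "sets \<mu> = sets N"
    and P: "Measurable.pred (borel \<Otimes>\<^sub>M N) (\<lambda>(r, a). P r a)"
    and AE_P: "\<And>r. AE a in \<mu>. P r a"
  shows "AE a in \<mu>. AE r in lborel. P r a"
proof -
  interpret pair_sigma_finite lborel \<mu>
    by (simp add: pair_sigma_finite_def assms(1) sigma_finite_lborel)
  have sets_eq: "sets (lborel \<Otimes>\<^sub>M \<mu>) = sets (borel \<Otimes>\<^sub>M N)"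
    by (rule sets_pair_measure_cong) (simp_all add: sets_\<mu>)
  have "{p \<in> space (lborel \<Otimes>\<^sub>M \<mu>). P (fst p) (snd p)} \<in> sets (lborel \<Otimes>\<^sub>M \<mu>)"
    unfolding sets_eq sets_eq_imp_space_eq[OF sets_eq] using P by (simp add: pred_def split_beta)
  moreover have "AE r in lborel. AE a in \<mu>. P r a"
    using AE_P by simp
  ultimately show ?thesis
    by (rule AE_commute[THEN iffD1])
qed

lemma integral_eq_of_distr_eq:
  fixes f :: "'b \<Rightarrow> real"
  assumes [measurable]: "X \<in> M \<rightarrow>\<^sub>M N" "Y \<in> M \<rightarrow>\<^sub>M N" "f \<in> borel_measurable N"
    and law: "distr M N X = distr M N Y"
  shows "(\<integral>\<omega>. f (X \<omega>) \<partial>M) = (\<integral>\<omega>. f (Y \<omega>) \<partial>M)"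
    and "integrable M (\<lambda>\<omega>. f (X \<omega>)) \<longleftrightarrow> integrable M (\<lambda>\<omega>. f (Y \<omega>))"
proof -
  show "(\<integral>\<omega>. f (X \<omega>) \<partial>M) = (\<integral>\<omega>. f (Y \<omega>) \<partial>M)"
    using integral_distr[of X M N f] integral_distr[of Y M N f] law by simp
  show "integrable M (\<lambda>\<omega>. f (X \<omega>)) \<longleftrightarrow> integrable M (\<lambda>\<omega>. f (Y \<omega>))"
    using integrable_distr_eq[of X M N f] integrable_distr_eq[of Y M N f] law by simp
qed

section \<open>Conditional distribution functions\<close>

lemma subalgebra_vimage_algebra:
  "Y \<in> M \<rightarrow>\<^sub>M N \<Longrightarrow> subalgebra M (vimage_algebra (space M) Y N)"
  unfolding subalgebra_def using sets_image_in_sets[OF refl] by simp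

lemma subalgebra_vimage_algebra_comp:
  assumes "Y \<in> M \<rightarrow>\<^sub>M N'" "\<Phi> \<in> N' \<rightarrow>\<^sub>M N"
  shows "subalgebra (vimage_algebra (space M) Y N') (vimage_algebra (space M) (\<lambda>\<omega>. \<Phi> (Y \<omega>)) N)"
proof -
  have "Y \<in> vimage_algebra (space M) Y N' \<rightarrow>\<^sub>M N'"
    using measurable_space[OF assms(1)] by (intro measurable_vimage_algebra1) auto
  then have "(\<lambda>\<omega>. \<Phi> (Y \<omega>)) \<in> vimage_algebra (space M) Y N' \<rightarrow>\<^sub>M N"
    using assms(2) by (rule measurable_compose)
  then show ?thesis
    unfolding subalgebra_def by (intro conjI sets_image_in_sets) auto
qed

definition cond_cdf_at :: "'a measure \<Rightarrow> 'b measure \<Rightarrow> ('a \<Rightarrow> real) \<Rightarrow> ('a \<Rightarrow> 'b) \<Rightarrow> real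
    \<Rightarrow> ('b \<Rightarrow> real) \<Rightarrow> bool" where
  "cond_cdf_at M N Z Y r f \<longleftrightarrow> (AE \<omega> in M. f (Y \<omega>) =
     real_cond_exp M (vimage_algebra (space M) Y N) (indicator {\<omega> \<in> space M. Z \<omega> \<le> r}) \<omega>)"

lemma cond_cdf_iff_cond_cdf_at:
  "cond_cdf M z y t Fc \<longleftrightarrow> (\<lambda>(r, a). Fc r a) \<in> borel_measurable (borel \<Otimes>\<^sub>M seqspace) \<and>
     (\<forall>r. cond_cdf_at M seqspace (z t) (past y t) r (Fc r))"
  unfolding cond_cdf_def cond_cdf_at_def by simp

lemma set_integral_vimage:
  fixes h :: "'a \<Rightarrow> real"
  assumes "Y \<in> M \<rightarrow>\<^sub>M N"
  shows "(\<integral>\<omega>\<in>Y -` C \<inter> space M. h \<omega> \<partial>M) = (\<integral>\<omega>. indicator C (Y \<omega>) * h \<omega> \<partial>M)"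
  unfolding set_lebesgue_integral_def
  by (intro Bochner_Integration.integral_cong) (auto simp: indicator_def)

lemma cond_cdf_at_iff_integrals:
  fixes Z :: "'a \<Rightarrow> real"
  assumes "prob_space M" and [measurable]: "Z \<in> borel_measurable M" "Y \<in> M \<rightarrow>\<^sub>M N"
    "f \<in> borel_measurable N"
  shows "cond_cdf_at M N Z Y r f \<longleftrightarrow> integrable M (\<lambda>\<omega>. f (Y \<omega>)) \<and>
    (\<forall>C \<in> sets N. (\<integral>\<omega>. indicator C (Y \<omega>) * indicator {..r} (Z \<omega>) \<partial>M)
      = (\<integral>\<omega>. indicator C (Y \<omega>) * f (Y \<omega>) \<partial>M))"
proof -
  interpret prob_space M by fact
  let ?V = "vimage_algebra (space M) Y N"
  let ?I = "indicator {\<omega> \<in> space M. Z \<omega> \<le> r} :: 'a \<Rightarrow> real"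
  interpret V: finite_measure_subalgebra M ?V
    by unfold_locales (simp add: subalgebra_vimage_algebra)
  have int_I: "integrable M ?I"
    by (auto intro!: integrable_real_indicator simp: less_top[symmetric])
  have [measurable]: "real_cond_exp M ?V ?I \<in> borel_measurable M"
    by (rule borel_measurable_cond_exp2)
  have I: "(\<integral>\<omega>\<in>Y -` C \<inter> space M. ?I \<omega> \<partial>M) = (\<integral>\<omega>. indicator C (Y \<omega>) * indicator {..r} (Z \<omega>) \<partial>M)"
    for C
    unfolding set_integral_vimage[OF assms(3)]
    by (intro Bochner_Integration.integral_cong) (auto simp: indicator_def)
  show ?thesis
  proof
    assume "cond_cdf_at M N Z Y r f"
    then have f_ae: "AE \<omega> in M. f (Y \<omega>) = real_cond_exp M ?V ?I \<omega>"
      by (simp add: cond_cdf_at_def)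
    have "integrable M (\<lambda>\<omega>. f (Y \<omega>))"
      using V.real_cond_exp_int(1)[OF int_I] f_ae
      by (subst integrable_cong_AE[where g="real_cond_exp M ?V ?I"]) (auto simp: borel_measurable_cond_exp2)
    moreover have "(\<integral>\<omega>. indicator C (Y \<omega>) * indicator {..r} (Z \<omega>) \<partial>M)
        = (\<integral>\<omega>. indicator C (Y \<omega>) * f (Y \<omega>) \<partial>M)" if C[measurable]: "C \<in> sets N" for C
    proof -
      have "(\<integral>\<omega>\<in>Y -` C \<inter> space M. ?I \<omega> \<partial>M) = (\<integral>\<omega>\<in>Y -` C \<inter> space M. real_cond_exp M ?V ?I \<omega> \<partial>M)"
        by (intro V.real_cond_exp_intA int_I in_vimage_algebra C)
      also have "\<dots> = (\<integral>\<omega>. indicator C (Y \<omega>) * f (Y \<omega>) \<partial>M)"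
        unfolding set_integral_vimage[OF assms(3)] using f_ae
        by (intro integral_cong_AE) auto
      finally show ?thesis
        unfolding I .
    qed
    ultimately show "integrable M (\<lambda>\<omega>. f (Y \<omega>)) \<and> (\<forall>C \<in> sets N.
        (\<integral>\<omega>. indicator C (Y \<omega>) * indicator {..r} (Z \<omega>) \<partial>M) = (\<integral>\<omega>. indicator C (Y \<omega>) * f (Y \<omega>) \<partial>M))"
      by blast
  next
    assume "integrable M (\<lambda>\<omega>. f (Y \<omega>)) \<and> (\<forall>C \<in> sets N.
        (\<integral>\<omega>. indicator C (Y \<omega>) * indicator {..r} (Z \<omega>) \<partial>M) = (\<integral>\<omega>. indicator C (Y \<omega>) * f (Y \<omega>) \<partial>M))"
    then have int_f: "integrable M (\<lambda>\<omega>. f (Y \<omega>))" and integrals: "\<And>C. C \<in> sets N \<Longrightarrow>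
        (\<integral>\<omega>. indicator C (Y \<omega>) * indicator {..r} (Z \<omega>) \<partial>M) = (\<integral>\<omega>. indicator C (Y \<omega>) * f (Y \<omega>) \<partial>M)"
      by blast+
    have "AE \<omega> in M. real_cond_exp M ?V ?I \<omega> = f (Y \<omega>)"
    proof (rule V.real_cond_exp_charact)
      fix A assume "A \<in> sets ?V"
      then obtain C where "C \<in> sets N" and A: "A = Y -` C \<inter> space M"
        using measurable_space[OF assms(3)] by (subst (asm) sets_vimage_algebra2) auto
      show "(\<integral>\<omega>\<in>A. ?I \<omega> \<partial>M) = (\<integral>\<omega>\<in>A. f (Y \<omega>) \<partial>M)"
        unfolding A I set_integral_vimage[OF assms(3), of C "\<lambda>\<omega>. f (Y \<omega>)"]
        using \<open>C \<in> sets N\<close> by (rule integrals)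
    next
      show "(\<lambda>\<omega>. f (Y \<omega>)) \<in> borel_measurable ?V"
        using measurable_space[OF assms(3)] by (intro measurable_compose[OF measurable_vimage_algebra1]) auto
    qed (use int_I int_f in auto)
    then show "cond_cdf_at M N Z Y r f"
      by (simp add: cond_cdf_at_def eq_commute)
  qed
qed

lemma cond_cdf_at_transfer:
  fixes Z1 Z2 :: "'a \<Rightarrow> real"
  assumes "prob_space M"
    and [measurable]: "Z1 \<in> borel_measurable M" "Z2 \<in> borel_measurable M"
      "Y1 \<in> M \<rightarrow>\<^sub>M N" "Y2 \<in> M \<rightarrow>\<^sub>M N" "f \<in> borel_measurable N"
    and law: "distr M (borel \<Otimes>\<^sub>M N) (\<lambda>\<omega>. (Z1 \<omega>, Y1 \<omega>)) = distr M (borel \<Otimes>\<^sub>M N) (\<lambda>\<omega>. (Z2 \<omega>, Y2 \<omega>))"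
    and f: "cond_cdf_at M N Z1 Y1 r f"
  shows "cond_cdf_at M N Z2 Y2 r f"
proof -
  have same_integral: "(\<integral>\<omega>. h (Z1 \<omega>) (Y1 \<omega>) \<partial>M) = (\<integral>\<omega>. h (Z2 \<omega>) (Y2 \<omega>) \<partial>M)"
    and same_integrable: "integrable M (\<lambda>\<omega>. h (Z1 \<omega>) (Y1 \<omega>)) \<longleftrightarrow> integrable M (\<lambda>\<omega>. h (Z2 \<omega>) (Y2 \<omega>))"
    if [measurable]: "(\<lambda>(z, y). h z y) \<in> borel_measurable (borel \<Otimes>\<^sub>M N)" for h :: "real \<Rightarrow> _ \<Rightarrow> real"
    using integral_eq_of_distr_eq[of _ M "borel \<Otimes>\<^sub>M N" _ "\<lambda>(z, y). h z y", OF _ _ _ law] by simp_all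
  have int_f: "integrable M (\<lambda>\<omega>. f (Y1 \<omega>))" and integrals: "\<And>C. C \<in> sets N \<Longrightarrow>
      (\<integral>\<omega>. indicator C (Y1 \<omega>) * indicator {..r} (Z1 \<omega>) \<partial>M) = (\<integral>\<omega>. indicator C (Y1 \<omega>) * f (Y1 \<omega>) \<partial>M)"
    using f cond_cdf_at_iff_integrals[OF assms(1,2,4,6)] by blast+
  have "integrable M (\<lambda>\<omega>. f (Y2 \<omega>))"
    using same_integrable[of "\<lambda>z y. f y"] int_f by simp
  moreover have "(\<integral>\<omega>. indicator C (Y2 \<omega>) * indicator {..r} (Z2 \<omega>) \<partial>M)
      = (\<integral>\<omega>. indicator C (Y2 \<omega>) * f (Y2 \<omega>) \<partial>M)" if C[measurable]: "C \<in> sets N" for C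
    using integrals[OF C] same_integral[of "\<lambda>z y. indicator C y * indicator {..r} z"]
      same_integral[of "\<lambda>z y. indicator C y * f y"] by simp
  ultimately show ?thesis
    using cond_cdf_at_iff_integrals[OF assms(1,3,5,6)] by blast
qed

lemma cond_cdf_at_comp:
  fixes Z :: "'a \<Rightarrow> real"
  assumes "prob_space M" and [measurable]: "Z \<in> borel_measurable M" "Y \<in> M \<rightarrow>\<^sub>M N'" "\<Phi> \<in> N' \<rightarrow>\<^sub>M N"
      "g \<in> borel_measurable N"
    and f: "cond_cdf_at M N' Z Y r f" and fg: "AE \<omega> in M. f (Y \<omega>) = g (\<Phi> (Y \<omega>))"
  shows "cond_cdf_at M N Z (\<lambda>\<omega>. \<Phi> (Y \<omega>)) r g"
proof -
  interpret prob_space M by fact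
  let ?G = "vimage_algebra (space M) Y N'" and ?F = "vimage_algebra (space M) (\<lambda>\<omega>. \<Phi> (Y \<omega>)) N"
  let ?I = "indicator {\<omega> \<in> space M. Z \<omega> \<le> r} :: 'a \<Rightarrow> real"
  interpret G: finite_measure_subalgebra M ?G
    by unfold_locales (simp add: subalgebra_vimage_algebra)
  interpret F: finite_measure_subalgebra M ?F
    by unfold_locales (simp add: subalgebra_vimage_algebra)
  have int_I: "integrable M ?I"
    by (auto intro!: integrable_real_indicator simp: less_top[symmetric])
  have G_ae: "AE \<omega> in M. real_cond_exp M ?G ?I \<omega> = g (\<Phi> (Y \<omega>))"
    using f fg by (auto simp: cond_cdf_at_def)
  have "integrable M (\<lambda>\<omega>. g (\<Phi> (Y \<omega>)))"
    using G.real_cond_exp_int(1)[OF int_I] G_ae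
    by (subst integrable_cong_AE[where g="real_cond_exp M ?G ?I"]) (auto simp: borel_measurable_cond_exp2)
  moreover have "(\<lambda>\<omega>. g (\<Phi> (Y \<omega>))) \<in> borel_measurable ?F"
    using measurable_space[of "\<lambda>\<omega>. \<Phi> (Y \<omega>)" M N]
    by (intro measurable_compose[OF measurable_vimage_algebra1]) auto
  ultimately have "AE \<omega> in M. real_cond_exp M ?F (\<lambda>\<omega>. g (\<Phi> (Y \<omega>))) \<omega> = g (\<Phi> (Y \<omega>))"
    by (rule F.real_cond_exp_F_meas)
  moreover have "AE \<omega> in M. real_cond_exp M ?F (real_cond_exp M ?G ?I) \<omega>
      = real_cond_exp M ?F (\<lambda>\<omega>. g (\<Phi> (Y \<omega>))) \<omega>"
    using G_ae by (intro F.real_cond_exp_cong) (auto simp: borel_measurable_cond_exp2)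
  moreover have "AE \<omega> in M. real_cond_exp M ?F (real_cond_exp M ?G ?I) \<omega> = real_cond_exp M ?F ?I \<omega>"
    by (intro F.real_cond_exp_nested_subalg subalgebra_vimage_algebra subalgebra_vimage_algebra_comp
        int_I) measurable
  ultimately show ?thesis
    unfolding cond_cdf_at_def by eventually_elim simp
qed

section \<open>One-sided sequences and the decoder\<close>

lemma sets_seqspace: "sets seqspace = sets borel"
  unfolding seqspace_def by (rule sets_PiM_equal_borel)

lemma space_seqspace [simp]: "space seqspace = UNIV"
  unfolding seqspace_def by (simp add: space_PiM)

lemma measurable_seqspaceI:
  "(\<And>k. (\<lambda>\<omega>. f \<omega> k) \<in> borel_measurable M) \<Longrightarrow> f \<in> M \<rightarrow>\<^sub>M seqspace"
  unfolding seqspace_def by (rule measurable_PiM_single') auto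

lemma measurable_hist: "(\<And>s. z s \<in> borel_measurable M) \<Longrightarrow> hist z t \<in> M \<rightarrow>\<^sub>M seqspace"
  unfolding hist_def by (rule measurable_seqspaceI)

lemma measurable_past: "(\<And>s. z s \<in> borel_measurable M) \<Longrightarrow> past z t \<in> M \<rightarrow>\<^sub>M seqspace"
  unfolding past_def by (rule measurable_seqspaceI)

(* decode H maps (nu_s, nu_(s-1), ...) to (xhat_s, xhat_(s-1), ...). *)
definition decode :: "((nat \<Rightarrow> real) \<Rightarrow> real) \<Rightarrow> (nat \<Rightarrow> real) \<Rightarrow> nat \<Rightarrow> real" where
  "decode H b = (\<lambda>k. H (\<lambda>j. b (k + j)))"

lemma measurable_decode:
  assumes [measurable]: "H \<in> borel_measurable seqspace"
  shows "decode H \<in> seqspace \<rightarrow>\<^sub>M seqspace"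
proof (unfold decode_def, rule measurable_seqspaceI)
  fix k
  have "(\<lambda>b. \<lambda>j. b (k + j)) \<in> seqspace \<rightarrow>\<^sub>M seqspace"
    by (rule measurable_seqspaceI) (simp add: seqspace_def)
  then show "(\<lambda>b. H (\<lambda>j. b (k + j))) \<in> borel_measurable seqspace"
    by measurable
qed

lemma measurable_comp_hist:
  "(\<And>s. z s \<in> borel_measurable M) \<Longrightarrow> H \<in> borel_measurable seqspace \<Longrightarrow>
    (\<lambda>\<omega>. H (hist z s \<omega>)) \<in> borel_measurable M"
  using measurable_hist by (rule measurable_compose)

lemma past_decode: "past (\<lambda>s \<omega>. H (hist z s \<omega>)) t \<omega> = decode H (past z t \<omega>)"
  by (simp add: past_def hist_def decode_def algebra_simps)

definition unit_seqs :: "(nat \<Rightarrow> real) set" where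
  "unit_seqs = {b. \<forall>k. b k \<in> {0..1}}"

lemma unit_seqs_borel: "unit_seqs \<in> sets borel"
proof -
  have "unit_seqs = (\<Inter>k. {b \<in> space seqspace. b k \<in> {0..1}})"
    by (auto simp: unit_seqs_def)
  also have "\<dots> \<in> sets seqspace"
    unfolding seqspace_def by measurable
  finally show ?thesis
    by (simp add: sets_seqspace)
qed

lemma dec_inv_decode:
  assumes "inj_on H unit_seqs" "b \<in> unit_seqs"
  shows "dec_inv H (decode H b) = b"
  unfolding dec_inv_def
proof (rule the_equality)
  fix b' assume b': "(\<forall>k. b' k \<in> {0..1}) \<and> (\<forall>k. decode H b k = H (\<lambda>j. b' (k + j)))"
  then have "H b' = H b"
    by (auto simp: decode_def dest: spec[of _ 0])
  with b' assms show "b' = b"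
    by (auto simp: unit_seqs_def dest: inj_onD)
qed (use assms(2) in \<open>simp add: unit_seqs_def decode_def\<close>)

lemma measurable_dec_inv_AE:
  assumes "prob_space M" and Y: "Y \<in> M \<rightarrow>\<^sub>M seqspace" and AE_unit: "AE \<omega> in M. Y \<omega> \<in> unit_seqs"
    and H: "H \<in> borel_measurable seqspace" and inj: "inj_on H unit_seqs"
  obtains g S where "g \<in> seqspace \<rightarrow>\<^sub>M seqspace" "S \<in> sets seqspace"
    "AE \<omega> in M. decode H (Y \<omega>) \<in> S" "\<And>a. a \<in> S \<Longrightarrow> g a = dec_inv H a"
proof -
  have Y_borel: "Y \<in> borel_measurable M"
    using Y by (simp add: measurable_cong_sets[OF refl sets_seqspace])
  define \<mu> where "\<mu> = distr M borel Y"
  have "finite_measure \<mu>"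
    unfolding \<mu>_def using Y_borel \<open>prob_space M\<close>
    by (intro prob_space.finite_measure prob_space.prob_space_distr)
  moreover have "AE b in \<mu>. b \<in> unit_seqs"
    unfolding \<mu>_def using AE_unit Y_borel unit_seqs_borel by (subst AE_distr_iff) auto
  moreover have decode_borel: "decode H \<in> borel_measurable borel"
    using measurable_decode[OF H] by (simp add: measurable_cong_sets[OF sets_seqspace sets_seqspace])
  ultimately obtain S where S: "S \<in> sets borel" "AE b in \<mu>. decode H b \<in> S"
    and meas: "dec_inv H \<in> borel_measurable (restrict_space borel S)"
    using borel_measurable_left_inverse_on_AE_set[of \<mu> "decode H" unit_seqs "dec_inv H"]
      unit_seqs_borel dec_inv_decode[OF inj] by (auto simp: \<mu>_def)
  define g where "g a = (if a \<in> S then dec_inv H a else (\<lambda>_. 0))" for a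
  have "g \<in> borel_measurable borel"
    using meas S(1) unfolding g_def by (subst (asm) measurable_restrict_space_iff) auto
  then have "g \<in> seqspace \<rightarrow>\<^sub>M seqspace"
    by (simp add: measurable_cong_sets[OF sets_seqspace sets_seqspace])
  moreover have "AE \<omega> in M. decode H (Y \<omega>) \<in> S"
    using S Y_borel measurable_sets[OF decode_borel S(1)] unfolding \<mu>_def
    by (subst (asm) AE_distr_iff) (auto simp: vimage_def)
  ultimately show thesis
    using S(1) by (intro that[of g S]) (auto simp: g_def sets_seqspace)
qed

section \<open>Laws of the observed and the decoded process\<close>

lemma same_fdd_distr_PiM_eq:
  fixes z w :: "int \<Rightarrow> 'a \<Rightarrow> real"
  assumes "prob_space M" and z: "\<And>s. z s \<in> borel_measurable M" and w: "\<And>s. w s \<in> borel_measurable M"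
    and fdd: "same_fdd M z w"
  shows "distr M (PiM UNIV (\<lambda>_. borel)) (\<lambda>\<omega> s. z s \<omega>) = distr M (PiM UNIV (\<lambda>_. borel)) (\<lambda>\<omega> s. w s \<omega>)"
proof (rule measure_eqI_PiM_infinite)
  have z_seq: "(\<lambda>\<omega> s. z s \<omega>) \<in> M \<rightarrow>\<^sub>M PiM UNIV (\<lambda>_. borel)"
    using z by (auto intro!: measurable_PiM_single')
  show "finite_measure (distr M (PiM UNIV (\<lambda>_. borel)) (\<lambda>\<omega> s. z s \<omega>))"
    using \<open>prob_space M\<close> z_seq by (intro prob_space.finite_measure prob_space.prob_space_distr)
  fix A :: "int \<Rightarrow> real set" and J :: "int set"
  assume J: "finite J" "J \<subseteq> UNIV" and A: "\<And>i. i \<in> J \<Longrightarrow> A i \<in> sets borel"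
  have cyl: "prod_emb UNIV (\<lambda>_. borel) J (Pi\<^sub>E J A) \<in> sets (PiM UNIV (\<lambda>_. borel))"
    using J A by (intro sets_PiM_I) auto
  have box: "Pi\<^sub>E J A \<in> sets (PiM J (\<lambda>_. borel))"
    using A by (intro sets_PiM_I_finite J) auto
  have cyl_box: "emeasure (distr M (PiM UNIV (\<lambda>_. borel)) (\<lambda>\<omega> s. v s \<omega>)) (prod_emb UNIV (\<lambda>_. borel) J (Pi\<^sub>E J A))
      = emeasure (distr M (PiM J (\<lambda>_. borel)) (\<lambda>\<omega>. restrict (\<lambda>s. v s \<omega>) J)) (Pi\<^sub>E J A)"
    if "\<And>s. v s \<in> borel_measurable M" for v :: "int \<Rightarrow> 'a \<Rightarrow> real"
  proof -
    have "(\<lambda>\<omega> s. v s \<omega>) \<in> M \<rightarrow>\<^sub>M PiM UNIV (\<lambda>_. borel)"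
      "(\<lambda>\<omega>. restrict (\<lambda>s. v s \<omega>) J) \<in> M \<rightarrow>\<^sub>M PiM J (\<lambda>_. borel)"
      using that by (auto intro!: measurable_PiM_single' measurable_restrict)
    then show ?thesis
      using cyl box by (simp add: emeasure_distr) (auto intro!: arg_cong[where f="emeasure M"] simp: prod_emb_def)
  qed
  show "emeasure (distr M (PiM UNIV (\<lambda>_. borel)) (\<lambda>\<omega> s. z s \<omega>)) (prod_emb UNIV (\<lambda>_. borel) J (Pi\<^sub>E J A))
      = emeasure (distr M (PiM UNIV (\<lambda>_. borel)) (\<lambda>\<omega> s. w s \<omega>)) (prod_emb UNIV (\<lambda>_. borel) J (Pi\<^sub>E J A))"
    using fdd J(1) by (simp add: cyl_box z w same_fdd_def)
qed simp_all

lemma same_fdd_distr_present_past_eq: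
  fixes z w :: "int \<Rightarrow> 'a \<Rightarrow> real"
  assumes "prob_space M" and z: "\<And>s. z s \<in> borel_measurable M" and w: "\<And>s. w s \<in> borel_measurable M"
    and fdd: "same_fdd M z w"
  shows "distr M (borel \<Otimes>\<^sub>M seqspace) (\<lambda>\<omega>. (z t \<omega>, past z t \<omega>)) =
    distr M (borel \<Otimes>\<^sub>M seqspace) (\<lambda>\<omega>. (w t \<omega>, past w t \<omega>))"
proof -
  define present_past where "present_past f = (f t, \<lambda>k. f (t - 1 - int k))" for f :: "int \<Rightarrow> real"
  have [measurable]: "present_past \<in> PiM UNIV (\<lambda>_. borel) \<rightarrow>\<^sub>M borel \<Otimes>\<^sub>M seqspace"
    unfolding present_past_def by (intro measurable_Pair measurable_seqspaceI) auto
  have "distr M (borel \<Otimes>\<^sub>M seqspace) (\<lambda>\<omega>. (v t \<omega>, past v t \<omega>))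
      = distr (distr M (PiM UNIV (\<lambda>_. borel)) (\<lambda>\<omega> s. v s \<omega>)) (borel \<Otimes>\<^sub>M seqspace) present_past"
    if "\<And>s. v s \<in> borel_measurable M" for v :: "int \<Rightarrow> 'a \<Rightarrow> real"
    using that by (subst distr_distr) (auto intro!: measurable_PiM_single' simp: comp_def present_past_def past_def)
  then show ?thesis
    using same_fdd_distr_PiM_eq[OF assms] z w by simp
qed

lemma same_fdd_distr_past_eq:
  fixes z w :: "int \<Rightarrow> 'a \<Rightarrow> real"
  assumes "prob_space M" and z: "\<And>s. z s \<in> borel_measurable M" and w: "\<And>s. w s \<in> borel_measurable M"
    and fdd: "same_fdd M z w"
  shows "distr M seqspace (past z t) = distr M seqspace (past w t)"
proof -
  have "distr M seqspace (past v t)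
      = distr (distr M (borel \<Otimes>\<^sub>M seqspace) (\<lambda>\<omega>. (v t \<omega>, past v t \<omega>))) seqspace snd"
    if "\<And>s. v s \<in> borel_measurable M" for v :: "int \<Rightarrow> 'a \<Rightarrow> real"
    using that measurable_past[OF that] by (subst distr_distr) (auto simp: comp_def)
  then show ?thesis
    using same_fdd_distr_present_past_eq[OF assms] z w by simp
qed

lemma same_fdd_distr_past_decode:
  assumes "prob_space M" and x: "\<And>s. x s \<in> borel_measurable M" and nu: "\<And>s. nu s \<in> borel_measurable M"
    and H: "H \<in> borel_measurable seqspace" and fdd: "same_fdd M (\<lambda>s \<omega>. H (hist nu s \<omega>)) x"
  shows "distr M seqspace (past x t) = distr M seqspace (\<lambda>\<omega>. decode H (past nu t \<omega>))"
  using same_fdd_distr_past_eq[OF assms(1) measurable_comp_hist[OF nu H] x fdd]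
  by (simp add: past_decode[abs_def])

lemma AE_past_in_unit_seqs:
  assumes "prob_space M" and nu: "\<And>s. nu s \<in> borel_measurable M"
    and uniform: "\<And>s. distr M borel (nu s) = uniform_measure lborel {0..1}"
  shows "AE \<omega> in M. past nu t \<omega> \<in> unit_seqs"
proof -
  have "AE \<omega> in M. nu s \<omega> \<in> {0..1}" for s
  proof -
    have "AE y in distr M borel (nu s). y \<in> {0..1::real}"
      unfolding uniform by (rule AE_uniform_measureI) auto
    then show ?thesis
      using nu by (subst (asm) AE_distr_iff) auto
  qed
  then have "AE \<omega> in M. \<forall>k. nu (t - 1 - int k) \<omega> \<in> {0..1}"
    by (simp add: AE_all_countable)
  then show ?thesis
    by (simp add: past_def unit_seqs_def)
qed

lemma cond_cdf_AE_eq_through_decoder: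
  fixes x nu :: "int \<Rightarrow> 'a \<Rightarrow> real" and F Fhat :: "real \<Rightarrow> (nat \<Rightarrow> real) \<Rightarrow> real"
  assumes "prob_space M" and x[measurable]: "\<And>s. x s \<in> borel_measurable M"
    and nu[measurable]: "\<And>s. nu s \<in> borel_measurable M"
    and H[measurable]: "H \<in> borel_measurable seqspace" and g[measurable]: "g \<in> seqspace \<rightarrow>\<^sub>M seqspace"
    and g_decode: "AE \<omega> in M. past nu t \<omega> = g (decode H (past nu t \<omega>))"
    and fdd: "same_fdd M (\<lambda>s \<omega>. H (hist nu s \<omega>)) x"
    and F: "cond_cdf M x x t F" and Fhat: "cond_cdf M (\<lambda>s \<omega>. H (hist nu s \<omega>)) nu t Fhat"
  shows "AE a in distr M seqspace (past x t). F r a = Fhat r (g a)"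
proof -
  define xh where "xh = (\<lambda>s \<omega>. H (hist nu s \<omega>))"
  have xh: "\<And>s. xh s \<in> borel_measurable M"
    unfolding xh_def using nu H by (rule measurable_comp_hist)
  have past_x: "past x t \<in> M \<rightarrow>\<^sub>M seqspace" and past_nu: "past nu t \<in> M \<rightarrow>\<^sub>M seqspace"
    and past_xh: "past xh t \<in> M \<rightarrow>\<^sub>M seqspace"
    using x nu xh by (simp_all add: measurable_past)
  have F_r: "F r \<in> borel_measurable seqspace" and Fhat_g: "(\<lambda>a. Fhat r (g a)) \<in> borel_measurable seqspace"
    using F Fhat by (auto simp: cond_cdf_def)
  have "cond_cdf_at M seqspace (xh t) (past xh t) r (F r)"
  proof (rule cond_cdf_at_transfer[OF \<open>prob_space M\<close> x xh past_x past_xh F_r])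
    show "distr M (borel \<Otimes>\<^sub>M seqspace) (\<lambda>\<omega>. (x t \<omega>, past x t \<omega>)) =
        distr M (borel \<Otimes>\<^sub>M seqspace) (\<lambda>\<omega>. (xh t \<omega>, past xh t \<omega>))"
      using same_fdd_distr_present_past_eq[OF \<open>prob_space M\<close> xh x fdd[folded xh_def]] by simp
    show "cond_cdf_at M seqspace (x t) (past x t) r (F r)"
      using F by (simp add: cond_cdf_iff_cond_cdf_at)
  qed
  moreover have "cond_cdf_at M seqspace (xh t) (past xh t) r (\<lambda>a. Fhat r (g a))"
  proof -
    have "cond_cdf_at M seqspace (xh t) (\<lambda>\<omega>. decode H (past nu t \<omega>)) r (\<lambda>a. Fhat r (g a))"
    proof (rule cond_cdf_at_comp[OF \<open>prob_space M\<close> xh past_nu measurable_decode[OF H] Fhat_g])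
      show "cond_cdf_at M seqspace (xh t) (past nu t) r (Fhat r)"
        using Fhat by (simp add: cond_cdf_iff_cond_cdf_at xh_def)
      show "AE \<omega> in M. Fhat r (past nu t \<omega>) = Fhat r (g (decode H (past nu t \<omega>)))"
        using g_decode by eventually_elim simp
    qed
    then show ?thesis
      by (simp add: xh_def past_decode[abs_def])
  qed
  ultimately have "AE \<omega> in M. F r (past xh t \<omega>) = Fhat r (g (past xh t \<omega>))"
    unfolding cond_cdf_at_def by eventually_elim simp
  moreover have "distr M seqspace (past x t) = distr M seqspace (past xh t)"
    using same_fdd_distr_past_decode[OF \<open>prob_space M\<close> x nu H fdd]
    by (simp add: xh_def past_decode[abs_def])
  ultimately show ?thesis
    using past_xh measurable_equality_set[OF F_r Fhat_g] by (simp only:) (subst AE_distr_iff, auto)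
qed

theorem theorem2:
  fixes M :: "'a measure" and x nu :: "int \<Rightarrow> 'a \<Rightarrow> real"
    and G H :: "(nat \<Rightarrow> real) \<Rightarrow> real" and t :: int
    and F Fhat :: "real \<Rightarrow> (nat \<Rightarrow> real) \<Rightarrow> real"
  assumes "prob_space M"
    and "\<forall>s. x s \<in> borel_measurable M"
    and "stationary M x"
    and "G \<in> borel_measurable seqspace"
    and "H \<in> borel_measurable seqspace"
    and "\<forall>s. \<forall>\<omega>\<in>space M. nu s \<omega> = G (hist x s \<omega>)"
    and "prob_space.indep_vars M (\<lambda>_. borel) nu UNIV"
    and "\<forall>s. distr M borel (nu s) = uniform_measure lborel {0..1}"
    and "same_fdd M (\<lambda>s \<omega>. H (hist nu s \<omega>)) x"
    and "inj_on H {b. \<forall>k. b k \<in> {0..1}}"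
    and "cond_cdf M x x t F"
    and "cond_cdf M (\<lambda>s \<omega>. H (hist nu s \<omega>)) nu t Fhat"
  shows "AE a in distr M seqspace (past x t).
           AE r in lborel. F r a = Fhat r (dec_inv H a)"
proof -
  have x: "\<And>s. x s \<in> borel_measurable M"
    using assms(2) by blast
  have nu: "\<And>s. nu s \<in> borel_measurable M"
    using assms(1,7) by (simp add: prob_space.indep_vars_def)
  have inj: "inj_on H unit_seqs"
    using assms(10) by (simp add: unit_seqs_def)
  have unit: "AE \<omega> in M. past nu t \<omega> \<in> unit_seqs"
    using assms(1,8) nu by (intro AE_past_in_unit_seqs) auto
  obtain g S where g[measurable]: "g \<in> seqspace \<rightarrow>\<^sub>M seqspace" and S[measurable]: "S \<in> sets seqspace"
    and S_ae: "AE \<omega> in M. decode H (past nu t \<omega>) \<in> S" and g_S: "\<And>a. a \<in> S \<Longrightarrow> g a = dec_inv H a"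
    using measurable_dec_inv_AE[OF assms(1) measurable_past[OF nu] unit assms(5) inj] by blast
  have "AE \<omega> in M. past nu t \<omega> = g (decode H (past nu t \<omega>))"
    using unit S_ae by eventually_elim (simp add: g_S dec_inv_decode[OF inj])
  note pointwise = cond_cdf_AE_eq_through_decoder[OF assms(1) x nu assms(5) g this assms(9,11,12)]
  have [measurable]: "(\<lambda>(r, a). F r a) \<in> borel_measurable (borel \<Otimes>\<^sub>M seqspace)"
      "(\<lambda>(r, a). Fhat r a) \<in> borel_measurable (borel \<Otimes>\<^sub>M seqspace)"
    using assms(11,12) by (simp_all add: cond_cdf_def)
  have "AE a in distr M seqspace (past x t). AE r in lborel. F r a = Fhat r (g a)"
    using assms(1) measurable_past[OF x]
    by (intro AE_AE_lborel_swap[OF _ _ _ pointwise] prob_space_imp_sigma_finite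
        prob_space.prob_space_distr) auto
  moreover have "AE a in distr M seqspace (past x t). a \<in> S"
    unfolding same_fdd_distr_past_decode[OF assms(1) x nu assms(5,9)]
    using S_ae measurable_compose[OF measurable_past[OF nu] measurable_decode[OF assms(5)]]
    by (subst AE_distr_iff) auto
  ultimately show ?thesis
    by eventually_elim (simp add: g_S)
qed

end
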